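(* Let $n\ge 3$ and let $A_1A_2\dots A_n$ be a polygon in the Euclidean plane, with vertex indices taken modulo $n$. Let $M$ be a point of the plane distinct from all vertices. Suppose that for every $i\in\{1,\dots,n\}$ and every $j\in\{1,\dots,n\}$ with $j\notin\{i,i-1\}$ (mod $n$), the line $A_iM$ meets the line $A_jA_{j+1}$ in a single point $M_{ij}$, and that $M_{ij}\notin\{A_j,A_{j+1}\}$. Then $$\prod_{\substack{i,j=1\\ j\notin\{i,\,i-1\}}}^{n}\frac{\overline{M_{ij}A_j}}{\overline{M_{ij}A_{j+1}}}=(-1)^n .$$
   Context: For three collinear points $X,Y,Z$ with $X\neq Z$, $\frac{\overline{XY}}{\overline{XZ}}$ denotes the ratio of signed (directed) lengths along their common line: it equals $|XY|/|XZ|$ if $Y$ and $Z$ lie on the same side of $X$ on that line, and $-|XY|/|XZ|$ otherwise. *)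

theory Defs
  imports "HOL-Analysis.Analysis"
begin

text \<open>Signed ratio of directed lengths XY / XZ for collinear X, Y, Z with X \<noteq> Z:
  positive iff Y and Z lie on the same side of X (i.e. Y lies on the ray from X through Z).\<close>
definition sratio :: "real^2 \<Rightarrow> real^2 \<Rightarrow> real^2 \<Rightarrow> real" where
  "sratio X Y Z =
     (if (\<exists>t\<ge>0. Y - X = t *\<^sub>R (Z - X)) then dist X Y / dist X Z
      else - (dist X Y / dist X Z))"

end

theory Submission
  imports Defs
begin

(* For fixed i the signed area of the triangle A_i M X is an affine function of X vanishing exactly
   on the line A_i M, so the signed ratio in which that line divides A_j A_(j+1) is the quotient of
   the areas at A_j and A_(j+1). For fixed i the product over j telescopes to
   area(A_i M A_(i+1)) / area(A_i M A_(i-1)); since the area is antisymmetric in its outer vertices,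
   the denominators over all i are, up to the sign (-1)^n, a permutation of the numerators. *)

definition area2 :: "real^2 \<Rightarrow> real^2 \<Rightarrow> real^2 \<Rightarrow> real" where
  "area2 a b c = (b$1 - a$1) * (c$2 - a$2) - (b$2 - a$2) * (c$1 - a$1)"

lemma area2_swap: "area2 c b a = - area2 a b c"
  by (simp add: area2_def algebra_simps)

lemma area2_affine_comb:
  assumes "u + v = 1"
  shows "area2 a m (u *\<^sub>R b + v *\<^sub>R c) = u * area2 a m b + v * area2 a m c"
proof -
  have u: "u = 1 - v" using assms by simp
  show ?thesis unfolding u by (simp add: area2_def algebra_simps)
qed

lemma area2_eq_0_iff:
  assumes "a \<noteq> m"
  shows "area2 a m x = 0 \<longleftrightarrow> x \<in> affine hull {a, m}"
proof
  assume "x \<in> affine hull {a, m}"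
  then obtain u v where "x = u *\<^sub>R a + v *\<^sub>R m" "u + v = 1"
    unfolding affine_hull_2 by blast
  then show "area2 a m x = 0"
    by (simp add: area2_affine_comb) (simp add: area2_def)
next
  assume area0: "area2 a m x = 0"
  have "\<exists>t. x - a = t *\<^sub>R (m - a)"
  proof (cases "m$1 = a$1")
    case False
    with area0 have "x - a = ((x$1 - a$1) / (m$1 - a$1)) *\<^sub>R (m - a)"
      by (simp add: area2_def vec_eq_iff forall_2) (simp add: field_simps)
    then show ?thesis by blast
  next
    case True
    with assms have "m$2 \<noteq> a$2" by (auto simp: vec_eq_iff forall_2)
    with area0 True have "x - a = ((x$2 - a$2) / (m$2 - a$2)) *\<^sub>R (m - a)"
      by (simp add: area2_def vec_eq_iff forall_2)
    then show ?thesis by blast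
  qed
  then obtain t where "x = (1 - t) *\<^sub>R a + t *\<^sub>R m"
    by (auto simp: algebra_simps)
  then show "x \<in> affine hull {a, m}"
    unfolding affine_hull_2 by force
qed

lemma sratio_eqI:
  assumes yx: "y - x = t *\<^sub>R (z - x)" and "z \<noteq> x"
  shows "sratio x y z = t"
proof -
  have "dist x y = \<bar>t\<bar> * dist x z"
    using yx by (metis dist_commute dist_norm norm_scaleR)
  with assms(2) have ratio: "dist x y / dist x z = \<bar>t\<bar>"
    by simp
  have unique: "s = t" if "y - x = s *\<^sub>R (z - x)" for s
  proof -
    have "s *\<^sub>R (z - x) = t *\<^sub>R (z - x)" using that yx by metis
    with assms(2) show ?thesis by (metis right_minus_eq scaleR_cancel_right)
  qed
  show ?thesis
  proof (cases "t \<ge> 0")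
    case True
    with yx have "\<exists>s\<ge>0. y - x = s *\<^sub>R (z - x)" by blast
    with ratio True show ?thesis by (simp add: sratio_def)
  next
    case False
    with unique have "\<not> (\<exists>s\<ge>0. y - x = s *\<^sub>R (z - x))" by blast
    with ratio False show ?thesis by (simp add: sratio_def)
  qed
qed

lemma sratio_line_intersection:
  assumes am: "a \<noteq> m"
    and meet: "affine hull {a, m} \<inter> affine hull {b, c} = {p}"
    and "p \<noteq> b" "p \<noteq> c"
  shows "area2 a m b \<noteq> 0" "area2 a m c \<noteq> 0"
    and "sratio p b c = area2 a m b / area2 a m c"
proof -
  have "x \<notin> affine hull {a, m}" if "x \<in> {b, c}" for x
  proof
    assume "x \<in> affine hull {a, m}"
    moreover have "x \<in> affine hull {b, c}" using that by (simp add: hull_inc)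
    ultimately have "x = p" using meet by blast
    with that assms(3,4) show False by blast
  qed
  then show "area2 a m b \<noteq> 0" and c0: "area2 a m c \<noteq> 0"
    using area2_eq_0_iff[OF am] by simp_all
  obtain u v where p: "p = u *\<^sub>R b + v *\<^sub>R c" and uv: "u + v = 1"
    using meet unfolding affine_hull_2 by blast
  have "u \<noteq> 0" using p uv \<open>p \<noteq> c\<close> by auto
  have "area2 a m p = 0"
    using meet area2_eq_0_iff[OF am] by blast
  then have "u * area2 a m b + v * area2 a m c = 0"
    using p uv by (simp add: area2_affine_comb)
  with \<open>u \<noteq> 0\<close> c0 have areas: "area2 a m b / area2 a m c = - v / u"
    by (simp add: field_simps)
  have bp: "b - p = v *\<^sub>R (b - c)" and cp: "c - p = u *\<^sub>R (c - b)"
    using p uv by (simp_all add: algebra_simps flip: scaleR_add_left)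
  have "(- v / u) *\<^sub>R (c - p) = (- v / u * u) *\<^sub>R (c - b)"
    using cp by simp
  also have "\<dots> = b - p"
    using bp \<open>u \<noteq> 0\<close> by (simp add: scaleR_diff_right)
  finally have "b - p = (- v / u) *\<^sub>R (c - p)" ..
  then show "sratio p b c = area2 a m b / area2 a m c"
    using sratio_eqI \<open>p \<noteq> c\<close> areas by metis
qed

lemma prod_ratio_perm_telescope:
  fixes f :: "'a \<Rightarrow> 'b::field"
  assumes "finite T" and s: "bij_betw s T T" and "p \<in> T" "s p = i" "s i \<noteq> i"
    and nz: "\<And>k. k \<in> T - {i} \<Longrightarrow> f k \<noteq> 0"
  shows "(\<Prod>j\<in>T - {i, p}. f j / f (s j)) = f (s i) / f p"
proof -
  have "i \<in> T" "s i \<in> T" "p \<noteq> i"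
    using assms bij_betwE by metis+
  define Q where "Q = (\<Prod>k\<in>T - {i}. f k)"
  have "Q \<noteq> 0"
    unfolding Q_def using \<open>finite T\<close> nz by (subst prod_zero_iff) auto
  have "T - {i} = insert p (T - {i, p})"
    using \<open>p \<in> T\<close> \<open>p \<noteq> i\<close> by auto
  then have Qp: "Q = f p * (\<Prod>j\<in>T - {i, p}. f j)"
    unfolding Q_def using \<open>finite T\<close> by simp
  have "T - {i} = insert (s i) (T - {i, s i})"
    using \<open>s i \<in> T\<close> \<open>s i \<noteq> i\<close> by auto
  then have Qs: "Q = f (s i) * (\<Prod>k\<in>T - {i, s i}. f k)"
    unfolding Q_def using \<open>finite T\<close> by simp
  have "bij_betw s (T - {i, p}) (T - {i, s i})"
  proof (rule bij_betw_subset[OF s])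
    have "inj_on s T" "s ` T = T"
      using s by (simp_all add: bij_betw_def)
    with \<open>i \<in> T\<close> \<open>p \<in> T\<close> \<open>s p = i\<close> show "s ` (T - {i, p}) = T - {i, s i}"
      by (auto simp: inj_on_image_set_diff)
  qed auto
  then have "(\<Prod>j\<in>T - {i, p}. f j / f (s j))
      = (\<Prod>j\<in>T - {i, p}. f j) / (\<Prod>k\<in>T - {i, s i}. f k)"
    by (simp add: prod_dividef prod.reindex_bij_betw)
  also have "\<dots> = f (s i) / f p"
  proof -
    have "f p \<noteq> 0" "(\<Prod>k\<in>T - {i, s i}. f k) \<noteq> 0"
      using \<open>Q \<noteq> 0\<close> Qp Qs by auto
    then show ?thesis
      using Qp Qs by (simp add: frac_eq_eq)
  qed
  finally show ?thesis .
qed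

lemma prod_ratio_antisym_perm:
  fixes g :: "'a \<Rightarrow> 'a \<Rightarrow> 'b::field"
  assumes "finite T" and s: "bij_betw s T T"
    and nz: "\<And>i. i \<in> T \<Longrightarrow> g i (s i) \<noteq> 0"
    and antisym: "\<And>i k. i \<in> T \<Longrightarrow> k \<in> T \<Longrightarrow> g k i = - g i k"
  shows "(\<Prod>i\<in>T. g i (s i) / g i (inv_into T s i)) = (-1) ^ card T"
proof -
  let ?p = "inv_into T s"
  have p: "bij_betw ?p T T"
    using s by (rule bij_betw_inv_into)
  define G where "G = (\<Prod>i\<in>T. g i (s i))"
  have "G \<noteq> 0"
    unfolding G_def using \<open>finite T\<close> nz by (subst prod_zero_iff) auto
  have "(\<Prod>i\<in>T. g i (?p i)) = (\<Prod>i\<in>T. - g (?p i) (s (?p i)))"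
  proof (rule prod.cong[OF refl])
    fix i assume "i \<in> T"
    moreover from this have "?p i \<in> T" "s (?p i) = i"
      using s p bij_betwE bij_betw_inv_into_right by metis+
    ultimately show "g i (?p i) = - g (?p i) (s (?p i))"
      using antisym[of "?p i" i] by simp
  qed
  also have "\<dots> = (\<Prod>i\<in>T. -1) * (\<Prod>i\<in>T. g (?p i) (s (?p i)))"
    unfolding prod.distrib[symmetric] by simp
  also have "\<dots> = (-1) ^ card T * G"
    unfolding G_def prod.reindex_bij_betw[OF p, of "\<lambda>i. g i (s i)"] by simp
  finally show ?thesis
    using \<open>G \<noteq> 0\<close> by (simp add: prod_dividef G_def[symmetric]) (metis power_one_over divide_minus1)
qed

lemma prod_sratio_polygon_perm:
  fixes T :: "'a set" and A :: "'a \<Rightarrow> real^2" and P :: "'a \<Rightarrow> 'a \<Rightarrow> real^2"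
  assumes "finite T" and s: "bij_betw s T T" and no_short_cycle: "\<And>i. i \<in> T \<Longrightarrow> s (s i) \<noteq> i"
    and M_nv: "\<And>i. i \<in> T \<Longrightarrow> M \<noteq> A i"
    and inter: "\<And>i j. i \<in> T \<Longrightarrow> j \<in> T \<Longrightarrow> j \<noteq> i \<Longrightarrow> s j \<noteq> i \<Longrightarrow>
        affine hull {A i, M} \<inter> affine hull {A j, A (s j)} = {P i j}"
    and notv: "\<And>i j. i \<in> T \<Longrightarrow> j \<in> T \<Longrightarrow> j \<noteq> i \<Longrightarrow> s j \<noteq> i \<Longrightarrow>
        P i j \<notin> {A j, A (s j)}"
  shows "(\<Prod>i\<in>T. \<Prod>j\<in>{j\<in>T. j \<noteq> i \<and> s j \<noteq> i}. sratio (P i j) (A j) (A (s j)))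
    = (-1) ^ card T"
proof -
  define g where "g i k = area2 (A i) M (A k)" for i k
  let ?p = "inv_into T s"
  have s_T: "s i \<in> T" and p_T: "?p i \<in> T" if "i \<in> T" for i
    using that bij_betwE[OF s] bij_betwE[OF bij_betw_inv_into[OF s]] by blast+
  have s_p: "s (?p i) = i" and p_s: "?p (s i) = i" if "i \<in> T" for i
    using bij_betw_inv_into_right[OF s that] bij_betw_inv_into_left[OF s that] .
  have s_ne: "s i \<noteq> i" if "i \<in> T" for i
    using no_short_cycle[OF that] by force
  have side: "sratio (P i j) (A j) (A (s j)) = g i j / g i (s j) \<and> g i j \<noteq> 0 \<and> g i (s j) \<noteq> 0"
    if "i \<in> T" "j \<in> T" "j \<noteq> i" "s j \<noteq> i" for i j
  proof -
    have "P i j \<noteq> A j" "P i j \<noteq> A (s j)"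
      using notv that by auto
    from sratio_line_intersection[OF M_nv[OF that(1), symmetric] inter[OF that] this]
    show ?thesis unfolding g_def by blast
  qed
  have nz: "g i k \<noteq> 0" if "i \<in> T" "k \<in> T" "k \<noteq> i" for i k
  proof (cases "s k = i")
    case False
    with side that show ?thesis by blast
  next
    case True
    \<comment> \<open>The side ending in k still misses i, as s has no 2-cycles.\<close>
    have "?p k \<noteq> i"
    proof
      assume "?p k = i"
      then have "s i = k" using s_p \<open>k \<in> T\<close> by metis
      with True no_short_cycle \<open>i \<in> T\<close> show False by metis
    qed
    with side[of i "?p k"] that p_T[of k] s_p[of k] show ?thesis by simp
  qed
  have inner: "(\<Prod>j\<in>{j\<in>T. j \<noteq> i \<and> s j \<noteq> i}. sratio (P i j) (A j) (A (s j)))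
      = g i (s i) / g i (?p i)" if "i \<in> T" for i
  proof -
    have "s j = i \<longleftrightarrow> j = ?p i" if "j \<in> T" for j
      using s_p[OF \<open>i \<in> T\<close>] p_s[OF that] by metis
    then have "{j\<in>T. j \<noteq> i \<and> s j \<noteq> i} = T - {i, ?p i}"
      by blast
    then have "(\<Prod>j\<in>{j\<in>T. j \<noteq> i \<and> s j \<noteq> i}. sratio (P i j) (A j) (A (s j)))
        = (\<Prod>j\<in>T - {i, ?p i}. g i j / g i (s j))"
      using side that by (intro prod.cong) auto
    also have "\<dots> = g i (s i) / g i (?p i)"
    proof (rule prod_ratio_perm_telescope[OF assms(1) s p_T[OF that] s_p[OF that]])
      show "s i \<noteq> i" using s_ne that .
      show "g i k \<noteq> 0" if "k \<in> T - {i}" for k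
        using nz \<open>i \<in> T\<close> that by blast
    qed
    finally show ?thesis .
  qed
  have "(\<Prod>i\<in>T. \<Prod>j\<in>{j\<in>T. j \<noteq> i \<and> s j \<noteq> i}. sratio (P i j) (A j) (A (s j)))
      = (\<Prod>i\<in>T. g i (s i) / g i (?p i))"
    using inner by (rule prod.cong[OF refl])
  also have "\<dots> = (-1) ^ card T"
  proof (rule prod_ratio_antisym_perm[OF assms(1) s])
    show "g i (s i) \<noteq> 0" if "i \<in> T" for i
      using nz that s_T s_ne by blast
    show "g k i = - g i k" for i k
      unfolding g_def by (rule area2_swap)
  qed
  finally show ?thesis .
qed

lemma bij_betw_Suc_mod: "bij_betw (\<lambda>j. Suc j mod n) {..<n} {..<n}"
proof -
  have "inj_on (\<lambda>j. Suc j mod n) {..<n}"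
    by (auto simp: inj_on_def mod_Suc split: if_splits)
  moreover have "(\<lambda>j. Suc j mod n) ` {..<n} \<subseteq> {..<n}"
    by auto
  ultimately show ?thesis
    by (simp add: bij_betw_def endo_inj_surj)
qed

lemma Suc_mod_Suc_mod_neq:
  assumes "n \<ge> 3" "i < n"
  shows "Suc (Suc i mod n) mod n \<noteq> i"
  using assms by (auto simp: mod_Suc)

theorem mainTheorem3:
  fixes n :: nat and A :: "nat \<Rightarrow> real^2" and M :: "real^2"
    and P :: "nat \<Rightarrow> nat \<Rightarrow> real^2"
  assumes n3: "n \<ge> 3"
    and polygon: "\<forall>j<n. A j \<noteq> A (Suc j mod n)"
    and M_nv: "\<forall>i<n. M \<noteq> A i"
    and inter: "\<forall>i<n. \<forall>j<n. j \<noteq> i \<and> Suc j mod n \<noteq> i \<longrightarrow>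
        affine hull {A i, M} \<inter> affine hull {A j, A (Suc j mod n)} = {P i j}"
    and notv: "\<forall>i<n. \<forall>j<n. j \<noteq> i \<and> Suc j mod n \<noteq> i \<longrightarrow>
        P i j \<notin> {A j, A (Suc j mod n)}"
  shows "(\<Prod>i<n. \<Prod>j\<in>{j. j < n \<and> j \<noteq> i \<and> Suc j mod n \<noteq> i}.
            sratio (P i j) (A j) (A (Suc j mod n))) = (-1) ^ n"
  using prod_sratio_polygon_perm[of "{..<n}" "\<lambda>j. Suc j mod n" M A P]
    bij_betw_Suc_mod Suc_mod_Suc_mod_neq[OF n3] M_nv inter notv
  by simp

end
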